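(* Let $T>0$, $0<M\le2$, $N=2$, and consider the problem of minimizing $\mathbb V(T)=\frac12(\xi_1(T)^2+\xi_2(T)^2)$ over $\alpha\in\mathcal U_M$, where $\dot\xi_i=-\xi_i+(1-\alpha_i)\bar\xi$ ($i=1,2$), $\bar\xi=\frac12(\xi_1+\xi_2)$, with initial datum satisfying $\bar\xi(0)>0$. If $\xi_1(0)=\xi_2(0)$, then a control $\alpha\in\mathcal U_M$ is optimal if and only if $\alpha_1+\alpha_2\equiv M$ and $\xi_1(T)=\xi_2(T)$.
   Context: $\mathcal U_M$ is the set of measurable $\alpha:[0,T]\to[0,1]^2$ with $\alpha_1(t)+\alpha_2(t)\le M$ for all $t$; "$\equiv$" means equality for (almost) all $t\in[0,T]$. *)

theory Defs
  imports "HOL-Analysis.Analysis"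
begin

definition admissible :: "real \<Rightarrow> real \<Rightarrow> (real \<Rightarrow> real) \<Rightarrow> (real \<Rightarrow> real) \<Rightarrow> bool" where
  "admissible T M a1 a2 \<longleftrightarrow>
     set_borel_measurable lborel {0..T} a1 \<and> set_borel_measurable lborel {0..T} a2 \<and>
     (\<forall>t\<in>{0..T}. 0 \<le> a1 t \<and> a1 t \<le> 1 \<and> 0 \<le> a2 t \<and> a2 t \<le> 1 \<and> a1 t + a2 t \<le> M)"

definition is_traj :: "real \<Rightarrow> (real \<Rightarrow> real) \<Rightarrow> (real \<Rightarrow> real) \<Rightarrow> real \<Rightarrow> real \<Rightarrow>
    (real \<Rightarrow> real) \<Rightarrow> (real \<Rightarrow> real) \<Rightarrow> bool" where
  "is_traj T a1 a2 x1 x2 \<xi>1 \<xi>2 \<longleftrightarrow>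
     \<xi>1 0 = x1 \<and> \<xi>2 0 = x2 \<and>
     continuous_on {0..T} \<xi>1 \<and> continuous_on {0..T} \<xi>2 \<and>
     (\<forall>t\<in>{0..T}.
        ((\<lambda>s. - \<xi>1 s + (1 - a1 s) * ((\<xi>1 s + \<xi>2 s) / 2)) has_integral (\<xi>1 t - x1)) {0..t} \<and>
        ((\<lambda>s. - \<xi>2 s + (1 - a2 s) * ((\<xi>1 s + \<xi>2 s) / 2)) has_integral (\<xi>2 t - x2)) {0..t})"

definition cost :: "real \<Rightarrow> (real \<Rightarrow> real) \<Rightarrow> (real \<Rightarrow> real) \<Rightarrow> real" where
  "cost T \<xi>1 \<xi>2 = ((\<xi>1 T)^2 + (\<xi>2 T)^2) / 2"

definition optimal :: "real \<Rightarrow> real \<Rightarrow> real \<Rightarrow> real \<Rightarrow> (real \<Rightarrow> real) \<Rightarrow> (real \<Rightarrow> real) \<Rightarrow> bool" where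
  "optimal T M x1 x2 a1 a2 \<longleftrightarrow> admissible T M a1 a2 \<and>
     (\<forall>\<xi>1 \<xi>2 b1 b2 \<eta>1 \<eta>2. is_traj T a1 a2 x1 x2 \<xi>1 \<xi>2 \<and> admissible T M b1 b2 \<and>
        is_traj T b1 b2 x1 x2 \<eta>1 \<eta>2 \<longrightarrow> cost T \<xi>1 \<xi>2 \<le> cost T \<eta>1 \<eta>2)"

end

theory Submission
  imports Defs
begin

text \<open>The mean \<open>\<xi>\<^sub>m = (\<xi>\<^sub>1 + \<xi>\<^sub>2) / 2\<close> solves \<open>\<xi>\<^sub>m' = - ((\<alpha>\<^sub>1 + \<alpha>\<^sub>2) / 2) \<xi>\<^sub>m\<close>, so it stays
  positive and \<open>\<xi>\<^sub>m(T) \<ge> \<xi>\<^sub>m(0) exp (- M T / 2)\<close>, with equality exactly when \<open>\<alpha>\<^sub>1 + \<alpha>\<^sub>2 = M\<close>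
  almost everywhere. As \<open>V(T) = \<xi>\<^sub>m(T)\<^sup>2 + (\<xi>\<^sub>1(T) - \<xi>\<^sub>2(T))\<^sup>2 / 4\<close>, the cost is at least
  \<open>\<xi>\<^sub>m(0)\<^sup>2 exp (- M T)\<close>, and since \<open>\<xi>\<^sub>1(0) = \<xi>\<^sub>2(0)\<close> this bound is attained by the constant control
  \<open>\<alpha>\<^sub>1 = \<alpha>\<^sub>2 = M / 2\<close>. Hence a control is optimal iff both terms are extremal; by Gronwall's
  inequality its trajectory, and thus its cost, is unique.\<close>

lemma integrating_factor_bound:
  fixes Y y p :: "real \<Rightarrow> real" and K c P \<tau> :: real
  assumes K: "0 < K" and \<tau>: "0 \<le> \<tau>"
    and Y_deriv: "\<And>t. t \<in> {0..\<tau>} \<Longrightarrow> (Y has_real_derivative y t) (at t within {0..\<tau>})"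
    and Y0: "Y 0 = 0"
    and y_eq: "\<And>t. t \<in> {0..\<tau>} \<Longrightarrow> y t = c - K * Y t + p t"
    and p_le: "\<And>t. t \<in> {0..\<tau>} \<Longrightarrow> p t \<le> P"
  shows "K * Y \<tau> \<le> (c + P) * (1 - exp (- K * \<tau>))"
proof -
  define H where "H t = Y t * exp (K * t) - (c + P) * (exp (K * t) - 1) / K" for t
  have H_deriv: "(H has_vector_derivative ((p t - P) * exp (K * t))) (at t within {0..\<tau>})"
    if t: "t \<in> {0..\<tau>}" for t
  proof -
    have "(H has_real_derivative
        y t * exp (K * t) + Y t * (exp (K * t) * K) - (c + P) * (exp (K * t) * K) / K)
        (at t within {0..\<tau>})"
      unfolding H_def[abs_def] using Y_deriv[OF t] by (auto intro!: derivative_eq_intros)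
    moreover have "y t * exp (K * t) + Y t * (exp (K * t) * K) - (c + P) * (exp (K * t) * K) / K
        = (p t - P) * exp (K * t)"
      using K by (simp add: y_eq[OF t] field_simps)
    ultimately show ?thesis by (simp add: has_real_derivative_iff_has_vector_derivative)
  qed
  have "((\<lambda>t. (p t - P) * exp (K * t)) has_integral (H \<tau> - H 0)) {0..\<tau>}"
    by (rule fundamental_theorem_of_calculus[OF \<tau> H_deriv])
  then have "H \<tau> - H 0 \<le> 0"
    by (rule has_integral_le[OF _ has_integral_0]) (use p_le in \<open>auto simp: mult_nonpos_nonneg\<close>)
  then have "K * Y \<tau> * exp (K * \<tau>) \<le> (c + P) * (exp (K * \<tau>) - 1)"
    using K Y0 by (simp add: H_def field_simps)
  then have "K * Y \<tau> * exp (K * \<tau>) * exp (- K * \<tau>) \<le> (c + P) * (exp (K * \<tau>) - 1) * exp (- K * \<tau>)"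
    by (simp add: mult_right_mono)
  then show ?thesis by (simp add: algebra_simps flip: exp_add)
qed

lemma gronwall_zero:
  fixes u :: "real \<Rightarrow> real"
  assumes L: "0 < L" and u_cont: "continuous_on {0..T} u"
    and u_le: "\<And>t. t \<in> {0..T} \<Longrightarrow> 0 \<le> u t \<and> u t \<le> L * integral {0..t} u"
    and \<tau>: "\<tau> \<in> {0..T}"
  shows "u \<tau> = 0"
proof -
  define U where "U t = integral {0..t} u" for t
  define H where "H t = U t * exp (- (L * t))" for t
  have u_cont_\<tau>: "continuous_on {0..\<tau>} u" using u_cont \<tau> by (auto intro: continuous_on_subset)
  have U_deriv: "(U has_real_derivative u t) (at t within {0..\<tau>})" if "t \<in> {0..\<tau>}" for t
    using integral_has_vector_derivative[OF u_cont_\<tau> that]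
    unfolding U_def[abs_def] has_real_derivative_iff_has_vector_derivative .
  have H_deriv: "(H has_vector_derivative ((u t - L * U t) * exp (- (L * t)))) (at t within {0..\<tau>})"
    if t: "t \<in> {0..\<tau>}" for t
  proof -
    have "(H has_real_derivative u t * exp (- (L * t)) + U t * (exp (- (L * t)) * (- L)))
        (at t within {0..\<tau>})"
      unfolding H_def[abs_def] using U_deriv[OF t] by (auto intro!: derivative_eq_intros)
    then show ?thesis
      by (simp add: has_real_derivative_iff_has_vector_derivative algebra_simps)
  qed
  have "((\<lambda>t. (u t - L * U t) * exp (- (L * t))) has_integral (H \<tau> - H 0)) {0..\<tau>}"
    by (rule fundamental_theorem_of_calculus) (use \<tau> H_deriv in auto)
  then have "H \<tau> - H 0 \<le> 0"
  proof (rule has_integral_le[OF _ has_integral_0])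
    fix t assume "t \<in> {0..\<tau>}"
    then show "(u t - L * U t) * exp (- (L * t)) \<le> 0"
      using u_le[of t] \<tau> unfolding U_def by (auto simp: mult_nonpos_nonneg)
  qed
  then have "U \<tau> \<le> 0" by (simp add: H_def U_def mult_le_0_iff)
  then show ?thesis using u_le[OF \<tau>] L unfolding U_def by (smt (verit) mult_nonneg_nonpos)
qed

lemma has_integral_nonneg_eq_0_iff_AE:
  fixes h :: "real \<Rightarrow> real"
  assumes h_int: "(h has_integral P) S" and h_nonneg: "\<And>x. x \<in> S \<Longrightarrow> 0 \<le> h x"
  shows "P = 0 \<longleftrightarrow> (AE x in lborel. x \<in> S \<longrightarrow> h x = 0)"
proof -
  have h_abs: "set_integrable lebesgue S h"
    using nonnegative_absolutely_integrable_1[of h S] h_int h_nonneg by blast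
  have "P = integral S h" using h_int by (simp add: integral_unique)
  also have "\<dots> = integral\<^sup>L lebesgue (\<lambda>x. indicator S x *\<^sub>R h x)"
    using set_lebesgue_integral_eq_integral(2)[OF h_abs] by (simp add: set_lebesgue_integral_def)
  finally have "P = 0 \<longleftrightarrow> (AE x in lebesgue. indicator S x *\<^sub>R h x = 0)"
    using h_abs unfolding set_integrable_def
    by (simp add: integral_nonneg_eq_0_iff_AE indicator_def h_nonneg)
  also have "\<dots> \<longleftrightarrow> (AE x in lborel. indicator S x *\<^sub>R h x = 0)"
    by (rule AE_completion_iff)
  also have "\<dots> \<longleftrightarrow> (AE x in lborel. x \<in> S \<longrightarrow> h x = 0)"
    by (intro AE_cong) (auto simp: indicator_def)
  finally show ?thesis .
qed

locale damped_scalar_ode =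
  fixes T K y0 :: real and g y :: "real \<Rightarrow> real"
  assumes T_nonneg: "0 \<le> T" and K_pos: "0 < K" and y0_pos: "0 < y0"
    and g_bounds: "\<And>t. t \<in> {0..T} \<Longrightarrow> 0 \<le> g t \<and> g t \<le> K"
    and y_cont: "continuous_on {0..T} y"
    and y_has_integral: "\<And>t. t \<in> {0..T} \<Longrightarrow> ((\<lambda>s. - (g s * y s)) has_integral (y t - y0)) {0..t}"
begin

text \<open>As \<open>g\<close> is merely measurable, \<open>y\<close> need not be differentiable, so only its primitive \<open>Y\<close>
  is differentiated. Writing \<open>y' = -g y\<close> as \<open>y' = -K y + (K - g) y\<close> gives
  \<open>y = y0 - K Y + slack\<close>; the slack is nondecreasing while \<open>y \<ge> 0\<close>, and the integrating factor
  \<open>exp (K t)\<close> turns this into \<open>y \<ge> (y0 + slack) exp (- K t)\<close>.\<close>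

definition Y :: "real \<Rightarrow> real" where "Y t = integral {0..t} y"

definition slack :: "real \<Rightarrow> real" where "slack t = integral {0..t} (\<lambda>s. (K - g s) * y s)"

lemma has_integral_slack:
  assumes t: "t \<in> {0..T}"
  shows "((\<lambda>s. (K - g s) * y s) has_integral (K * Y t + (y t - y0))) {0..t}"
proof -
  have "continuous_on {0..t} y" using y_cont t by (auto intro: continuous_on_subset)
  then have "(y has_integral Y t) {0..t}"
    unfolding Y_def by (intro integrable_integral integrable_continuous_interval)
  from has_integral_add[OF has_integral_mult_right[OF this, of K] y_has_integral[OF t]]
  show ?thesis by (simp add: algebra_simps)
qed

lemma y_eq: "t \<in> {0..T} \<Longrightarrow> y t = y0 - K * Y t + slack t"
  using integral_unique[OF has_integral_slack] unfolding slack_def by simp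

lemma Y_deriv:
  assumes "\<tau> \<in> {0..T}" "t \<in> {0..\<tau>}"
  shows "(Y has_real_derivative y t) (at t within {0..\<tau>})"
proof -
  have "continuous_on {0..\<tau>} y" using y_cont assms by (auto intro: continuous_on_subset)
  from integral_has_vector_derivative[OF this assms(2)] show ?thesis
    unfolding Y_def[abs_def] has_real_derivative_iff_has_vector_derivative .
qed

lemma slack_mono:
  assumes \<tau>: "\<tau> \<in> {0..T}" and y_nonneg: "\<forall>t\<in>{0..\<tau>}. 0 \<le> y t" and t: "t \<in> {0..\<tau>}"
  shows "slack t \<le> slack \<tau>"
proof -
  define h where "h s = (K - g s) * y s" for s
  have h_int: "h integrable_on {0..\<tau>}" using has_integral_slack[OF \<tau>] unfolding h_def by blast
  have "integral {0..t} h + integral {t..\<tau>} h = integral {0..\<tau>} h"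
    using t h_int by (intro Henstock_Kurzweil_Integration.integral_combine) auto
  moreover have "0 \<le> integral {t..\<tau>} h"
  proof (rule integral_nonneg)
    show "h integrable_on {t..\<tau>}" using t by (intro integrable_subinterval_real[OF h_int]) auto
    show "0 \<le> h s" if "s \<in> {t..\<tau>}" for s
      using g_bounds[of s] y_nonneg that t \<tau> unfolding h_def by auto
  qed
  ultimately show ?thesis unfolding slack_def h_def by linarith
qed

lemma lower_bound_while_nonneg:
  assumes \<tau>: "\<tau> \<in> {0..T}" and y_nonneg: "\<forall>t\<in>{0..\<tau>}. 0 \<le> y t"
  shows "(y0 + slack \<tau>) * exp (- K * \<tau>) \<le> y \<tau>" and "0 \<le> slack \<tau>"
proof -
  have "K * Y \<tau> \<le> (y0 + slack \<tau>) * (1 - exp (- K * \<tau>))"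
  proof (rule integrating_factor_bound[OF K_pos])
    show "(Y has_real_derivative y t) (at t within {0..\<tau>})" if "t \<in> {0..\<tau>}" for t
      using Y_deriv[OF \<tau> that] .
    show "y t = y0 - K * Y t + slack t" if "t \<in> {0..\<tau>}" for t
      using y_eq[of t] that \<tau> by auto
    show "slack t \<le> slack \<tau>" if "t \<in> {0..\<tau>}" for t
      using slack_mono[OF \<tau> y_nonneg that] .
  qed (use \<tau> in \<open>auto simp: Y_def\<close>)
  moreover have "slack 0 \<le> slack \<tau>" using slack_mono[OF \<tau> y_nonneg, of 0] \<tau> by auto
  ultimately show "(y0 + slack \<tau>) * exp (- K * \<tau>) \<le> y \<tau>" and "0 \<le> slack \<tau>"
    using y_eq[OF \<tau>] by (auto simp: slack_def algebra_simps)
qed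

lemma y_pos:
  assumes t1: "t1 \<in> {0..T}"
  shows "0 < y t1"
proof (rule ccontr)
  assume "\<not> 0 < y t1"
  have y_0: "y 0 = y0"
    using y_eq[of 0] T_nonneg by (simp add: Y_def slack_def)
  have zero_before: "\<exists>z. 0 \<le> z \<and> z \<le> t \<and> y z = 0" if "t \<in> {0..T}" "y t \<le> 0" for t
  proof (rule IVT2')
    show "continuous_on {0..t} y" using y_cont that by (auto intro: continuous_on_subset)
  qed (use that y_0 y0_pos in auto)
  define Z where "Z = {t \<in> {0..T}. y t = 0}"
  have "closed Z" unfolding Z_def by (intro continuous_closed_preimage_constant y_cont) auto
  moreover have "Z \<noteq> {}"
    using zero_before[OF t1] \<open>\<not> 0 < y t1\<close> t1 unfolding Z_def by force
  moreover have Z_bdd: "bdd_below Z" unfolding Z_def by (auto intro: bdd_belowI[of _ 0])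
  ultimately have "Inf Z \<in> Z" by (intro closed_contains_Inf)
  then have first: "Inf Z \<in> {0..T}" "y (Inf Z) = 0" unfolding Z_def by auto
  have "0 \<le> y t" if t: "t \<in> {0..Inf Z}" for t
  proof (rule ccontr)
    assume "\<not> 0 \<le> y t"
    moreover have "t \<in> {0..T}" using t first by auto
    ultimately obtain z where z: "0 \<le> z" "z \<le> t" "y z = 0" using zero_before by force
    then have "z \<in> Z" using t first unfolding Z_def by auto
    then have "Inf Z \<le> z" by (rule cInf_lower[OF _ Z_bdd])
    then have "z = t" using z t by auto
    then show False using z \<open>\<not> 0 \<le> y t\<close> by simp
  qed
  then have "(y0 + slack (Inf Z)) * exp (- K * Inf Z) \<le> 0" "0 \<le> slack (Inf Z)"
    using lower_bound_while_nonneg[OF first(1)] first(2) by auto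
  then show False using y0_pos by (simp add: mult_le_0_iff)
qed

lemma y_nonneg: "\<forall>t\<in>{0..T}. 0 \<le> y t"
  using y_pos less_imp_le by blast

lemma terminal_lower_bound: "y0 * exp (- K * T) \<le> y T"
proof -
  have T: "T \<in> {0..T}" using T_nonneg by simp
  note lower = lower_bound_while_nonneg[OF T y_nonneg]
  have "y0 * exp (- K * T) \<le> (y0 + slack T) * exp (- K * T)"
    using lower(2) by (intro mult_right_mono) auto
  with lower(1) show ?thesis by linarith
qed

lemma upper_bound_if_slack_0:
  assumes slack_T: "slack T = 0"
  shows "y T \<le> y0 * exp (- K * T)"
proof -
  have T: "T \<in> {0..T}" using T_nonneg by simp
  have slack_0: "slack t = 0" if "t \<in> {0..T}" for t
    using slack_mono[OF T y_nonneg that] lower_bound_while_nonneg(2)[of t] y_nonneg that slack_T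
    by auto
  have "K * (- Y T) \<le> (- y0 + 0) * (1 - exp (- K * T))"
  proof (rule integrating_factor_bound[OF K_pos T_nonneg, where y = "\<lambda>t. - y t" and p = "\<lambda>_. 0"])
    show "((\<lambda>t. - Y t) has_real_derivative - y t) (at t within {0..T})" if "t \<in> {0..T}" for t
      using Y_deriv[OF T that] by (auto intro!: derivative_eq_intros)
    show "- y t = - y0 - K * - Y t + 0" if "t \<in> {0..T}" for t
      using y_eq[OF that] slack_0[OF that] by simp
  qed (auto simp: Y_def)
  then show ?thesis using y_eq[OF T] slack_T by (simp add: algebra_simps)
qed

lemma slack_eq_0_iff: "slack T = 0 \<longleftrightarrow> (AE t in lborel. t \<in> {0..T} \<longrightarrow> g t = K)"
proof -
  have "slack T = 0 \<longleftrightarrow> (AE t in lborel. t \<in> {0..T} \<longrightarrow> (K - g t) * y t = 0)"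
  proof (rule has_integral_nonneg_eq_0_iff_AE)
    show "((\<lambda>s. (K - g s) * y s) has_integral slack T) {0..T}"
      using has_integral_slack[of T] y_eq[of T] T_nonneg by simp
    show "0 \<le> (K - g t) * y t" if "t \<in> {0..T}" for t
      using g_bounds[OF that] y_pos[OF that] by simp
  qed
  also have "\<dots> \<longleftrightarrow> (AE t in lborel. t \<in> {0..T} \<longrightarrow> g t = K)"
    by (intro AE_cong) (use y_pos in fastforce)
  finally show ?thesis .
qed

lemma terminal_eq_iff: "y T = y0 * exp (- K * T) \<longleftrightarrow> (AE t in lborel. t \<in> {0..T} \<longrightarrow> g t = K)"
proof -
  have T: "T \<in> {0..T}" using T_nonneg by simp
  note lower = lower_bound_while_nonneg[OF T y_nonneg]
  have "y T = y0 * exp (- K * T) \<longleftrightarrow> slack T = 0"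
  proof
    assume "y T = y0 * exp (- K * T)"
    then have "slack T * exp (- K * T) \<le> 0" using lower(1) by (simp add: algebra_simps)
    then show "slack T = 0" using lower(2) by (simp add: mult_le_0_iff)
  qed (use upper_bound_if_slack_0 lower in \<open>auto intro: antisym\<close>)
  then show ?thesis using slack_eq_0_iff by simp
qed

end

lemma is_traj_mean:
  assumes tr: "is_traj T b1 b2 x1 x2 \<eta>1 \<eta>2"
  shows "continuous_on {0..T} (\<lambda>t. (\<eta>1 t + \<eta>2 t) / 2)"
    and "t \<in> {0..T} \<Longrightarrow> ((\<lambda>s. - ((b1 s + b2 s) / 2 * ((\<eta>1 s + \<eta>2 s) / 2))) has_integral
           ((\<eta>1 t + \<eta>2 t) / 2 - (x1 + x2) / 2)) {0..t}"
proof -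
  show "continuous_on {0..T} (\<lambda>t. (\<eta>1 t + \<eta>2 t) / 2)"
    using tr unfolding is_traj_def by (auto intro!: continuous_intros)
  show "((\<lambda>s. - ((b1 s + b2 s) / 2 * ((\<eta>1 s + \<eta>2 s) / 2))) has_integral
      ((\<eta>1 t + \<eta>2 t) / 2 - (x1 + x2) / 2)) {0..t}" if "t \<in> {0..T}"
  proof -
    let ?f = "\<lambda>s. (- \<eta>1 s + (1 - b1 s) * ((\<eta>1 s + \<eta>2 s) / 2)
        + (- \<eta>2 s + (1 - b2 s) * ((\<eta>1 s + \<eta>2 s) / 2))) / 2"
    from tr that have "(?f has_integral (\<eta>1 t - x1 + (\<eta>2 t - x2)) / 2) {0..t}"
      unfolding is_traj_def by (intro has_integral_divide has_integral_add) auto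
    moreover have "?f = (\<lambda>s. - ((b1 s + b2 s) / 2 * ((\<eta>1 s + \<eta>2 s) / 2)))"
      by (simp add: fun_eq_iff field_simps)
    moreover have "(\<eta>1 t - x1 + (\<eta>2 t - x2)) / 2 = (\<eta>1 t + \<eta>2 t) / 2 - (x1 + x2) / 2"
      by (simp add: field_simps)
    ultimately show ?thesis by (simp only:)
  qed
qed

lemma is_traj_mean_terminal:
  assumes T: "0 \<le> T" and M: "0 < M" and x_pos: "0 < (x1 + x2) / 2"
    and adm: "admissible T M b1 b2" and tr: "is_traj T b1 b2 x1 x2 \<eta>1 \<eta>2"
  shows "(x1 + x2) / 2 * exp (- (M / 2) * T) \<le> (\<eta>1 T + \<eta>2 T) / 2"
    and "(\<eta>1 T + \<eta>2 T) / 2 = (x1 + x2) / 2 * exp (- (M / 2) * T) \<longleftrightarrow>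
         (AE t in lborel. t \<in> {0..T} \<longrightarrow> b1 t + b2 t = M)"
proof -
  interpret damped_scalar_ode T "M / 2" "(x1 + x2) / 2" "\<lambda>t. (b1 t + b2 t) / 2"
    "\<lambda>t. (\<eta>1 t + \<eta>2 t) / 2"
  proof
    show "0 \<le> (b1 t + b2 t) / 2 \<and> (b1 t + b2 t) / 2 \<le> M / 2" if "t \<in> {0..T}" for t
      using adm that unfolding admissible_def by fastforce
  qed (use T M x_pos is_traj_mean[OF tr] in auto)
  show "(x1 + x2) / 2 * exp (- (M / 2) * T) \<le> (\<eta>1 T + \<eta>2 T) / 2"
    by (rule terminal_lower_bound)
  show "(\<eta>1 T + \<eta>2 T) / 2 = (x1 + x2) / 2 * exp (- (M / 2) * T) \<longleftrightarrow>
      (AE t in lborel. t \<in> {0..T} \<longrightarrow> b1 t + b2 t = M)"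
    unfolding terminal_eq_iff by (intro AE_cong) auto
qed

lemma cost_eq_mean_diff: "cost T f1 f2 = ((f1 T + f2 T) / 2)\<^sup>2 + (f1 T - f2 T)\<^sup>2 / 4"
  unfolding cost_def by (simp add: power2_eq_square field_simps)

lemma cost_lower_bound:
  assumes "0 \<le> T" "0 < M" and x_pos: "0 < (x1 + x2) / 2"
    and "admissible T M b1 b2" "is_traj T b1 b2 x1 x2 \<eta>1 \<eta>2"
  defines "E \<equiv> (x1 + x2) / 2 * exp (- (M / 2) * T)"
  shows "E\<^sup>2 \<le> cost T \<eta>1 \<eta>2"
    and "cost T \<eta>1 \<eta>2 = E\<^sup>2 \<longleftrightarrow>
         (AE t in lborel. t \<in> {0..T} \<longrightarrow> b1 t + b2 t = M) \<and> \<eta>1 T = \<eta>2 T"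
proof -
  note mean = is_traj_mean_terminal[OF assms(1-5), folded E_def]
  define m where "m = (\<eta>1 T + \<eta>2 T) / 2"
  define d where "d = \<eta>1 T - \<eta>2 T"
  have "0 < E" using x_pos unfolding E_def by simp
  then have m_sq: "E\<^sup>2 \<le> m\<^sup>2" "m\<^sup>2 = E\<^sup>2 \<longleftrightarrow> m = E"
    using mean(1) unfolding m_def by (auto simp: power_mono power2_eq_iff_nonneg)
  have cost: "cost T \<eta>1 \<eta>2 = m\<^sup>2 + d\<^sup>2 / 4"
    unfolding cost_eq_mean_diff m_def d_def ..
  have "0 \<le> d\<^sup>2" by simp
  then show "E\<^sup>2 \<le> cost T \<eta>1 \<eta>2" using m_sq(1) cost by linarith
  have "cost T \<eta>1 \<eta>2 = E\<^sup>2 \<longleftrightarrow> m\<^sup>2 = E\<^sup>2 \<and> d\<^sup>2 = 0"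
    unfolding cost using m_sq(1) \<open>0 \<le> d\<^sup>2\<close> by (intro iffI conjI) (linarith | simp)+
  then show "cost T \<eta>1 \<eta>2 = E\<^sup>2 \<longleftrightarrow>
      (AE t in lborel. t \<in> {0..T} \<longrightarrow> b1 t + b2 t = M) \<and> \<eta>1 T = \<eta>2 T"
    using m_sq(2) mean(2) unfolding m_def d_def by simp
qed

lemma is_traj_constant_control:
  "is_traj T (\<lambda>_. k) (\<lambda>_. k) x x (\<lambda>t. x * exp (- k * t)) (\<lambda>t. x * exp (- k * t))"
  unfolding is_traj_def
proof (intro conjI ballI)
  fix t :: real assume "t \<in> {0..T}"
  then have "((\<lambda>s. - k * (x * exp (- k * s))) has_integral (x * exp (- k * t) - x * exp (- k * 0))) {0..t}"
    by (intro fundamental_theorem_of_calculus)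
      (auto simp flip: has_real_derivative_iff_has_vector_derivative intro!: derivative_eq_intros)
  then show "((\<lambda>s. - (x * exp (- k * s)) + (1 - k) * ((x * exp (- k * s) + x * exp (- k * s)) / 2))
      has_integral x * exp (- k * t) - x) {0..t}" (is ?traj_eq)
    by (simp add: algebra_simps)
  then show ?traj_eq .
qed (auto intro!: continuous_intros)

lemma damped_component_abs_bound:
  fixes p q c u :: "real \<Rightarrow> real"
  assumes p_int: "((\<lambda>s. - p s + c s * ((p s + q s) / 2)) has_integral p t) {0..t}"
    and c: "\<And>s. s \<in> {0..t} \<Longrightarrow> 0 \<le> c s \<and> c s \<le> 1"
    and u_int: "u integrable_on {0..t}" and u_ge: "\<And>s. s \<in> {0..t} \<Longrightarrow> \<bar>p s\<bar> + \<bar>q s\<bar> \<le> u s"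
  shows "\<bar>p t\<bar> \<le> 3 / 2 * integral {0..t} u"
proof -
  have "norm (integral {0..t} (\<lambda>s. - p s + c s * ((p s + q s) / 2)))
      \<le> integral {0..t} (\<lambda>s. 3 / 2 * u s)"
  proof (rule integral_norm_bound_integral)
    show "(\<lambda>s. - p s + c s * ((p s + q s) / 2)) integrable_on {0..t}" using p_int by blast
    show "(\<lambda>s. 3 / 2 * u s) integrable_on {0..t}" using u_int by simp
    fix s assume s: "s \<in> {0..t}"
    have "\<bar>c s * ((p s + q s) / 2)\<bar> \<le> \<bar>(p s + q s) / 2\<bar>"
      using c[OF s] by (simp add: abs_mult mult_left_le_one_le)
    also have "\<dots> \<le> (\<bar>p s\<bar> + \<bar>q s\<bar>) / 2"
      using abs_triangle_ineq[of "p s" "q s"] by simp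
    finally have damping: "\<bar>c s * ((p s + q s) / 2)\<bar> \<le> (\<bar>p s\<bar> + \<bar>q s\<bar>) / 2" .
    have "norm (- p s + c s * ((p s + q s) / 2)) \<le> \<bar>p s\<bar> + \<bar>c s * ((p s + q s) / 2)\<bar>"
      using abs_triangle_ineq[of "- p s" "c s * ((p s + q s) / 2)"] by simp
    also have "\<dots> \<le> \<bar>p s\<bar> + (\<bar>p s\<bar> + \<bar>q s\<bar>) / 2"
      using damping by (rule add_left_mono)
    also have "\<dots> \<le> 3 / 2 * u s"
      using u_ge[OF s] abs_ge_zero[of "q s"] by argo
    finally show "norm (- p s + c s * ((p s + q s) / 2)) \<le> 3 / 2 * u s" .
  qed
  then show ?thesis using integral_unique[OF p_int] by simp
qed

lemma is_traj_unique:
  assumes adm: "admissible T M a1 a2" and \<xi>: "is_traj T a1 a2 x1 x2 \<xi>1 \<xi>2"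
    and \<zeta>: "is_traj T a1 a2 x1 x2 \<zeta>1 \<zeta>2" and \<tau>: "\<tau> \<in> {0..T}"
  shows "\<xi>1 \<tau> = \<zeta>1 \<tau> \<and> \<xi>2 \<tau> = \<zeta>2 \<tau>"
proof -
  define u where "u t = \<bar>\<xi>1 t - \<zeta>1 t\<bar> + \<bar>\<xi>2 t - \<zeta>2 t\<bar>" for t
  have u_cont: "continuous_on {0..T} u"
    using \<xi> \<zeta> unfolding is_traj_def u_def by (auto intro!: continuous_intros)
  have "u t \<le> 3 * integral {0..t} u" if t: "t \<in> {0..T}" for t
  proof -
    have u_int: "u integrable_on {0..t}"
      using t by (intro integrable_continuous_interval continuous_on_subset[OF u_cont]) auto
    have c: "0 \<le> 1 - a1 s \<and> 1 - a1 s \<le> 1" "0 \<le> 1 - a2 s \<and> 1 - a2 s \<le> 1"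
      if "s \<in> {0..t}" for s
      using adm that t unfolding admissible_def by auto
    from \<xi> t have \<xi>1: "((\<lambda>s. - \<xi>1 s + (1 - a1 s) * ((\<xi>1 s + \<xi>2 s) / 2)) has_integral (\<xi>1 t - x1)) {0..t}"
      and \<xi>2: "((\<lambda>s. - \<xi>2 s + (1 - a2 s) * ((\<xi>1 s + \<xi>2 s) / 2)) has_integral (\<xi>2 t - x2)) {0..t}"
      unfolding is_traj_def by auto
    from \<zeta> t have \<zeta>1: "((\<lambda>s. - \<zeta>1 s + (1 - a1 s) * ((\<zeta>1 s + \<zeta>2 s) / 2)) has_integral (\<zeta>1 t - x1)) {0..t}"
      and \<zeta>2: "((\<lambda>s. - \<zeta>2 s + (1 - a2 s) * ((\<zeta>1 s + \<zeta>2 s) / 2)) has_integral (\<zeta>2 t - x2)) {0..t}"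
      unfolding is_traj_def by auto
    have d1: "((\<lambda>s. - (\<xi>1 s - \<zeta>1 s) + (1 - a1 s) * (((\<xi>1 s - \<zeta>1 s) + (\<xi>2 s - \<zeta>2 s)) / 2))
        has_integral (\<xi>1 t - \<zeta>1 t)) {0..t}"
      using has_integral_diff[OF \<xi>1 \<zeta>1] by (simp add: algebra_simps add_divide_distrib diff_divide_distrib)
    have d2: "((\<lambda>s. - (\<xi>2 s - \<zeta>2 s) + (1 - a2 s) * (((\<xi>2 s - \<zeta>2 s) + (\<xi>1 s - \<zeta>1 s)) / 2))
        has_integral (\<xi>2 t - \<zeta>2 t)) {0..t}"
      using has_integral_diff[OF \<xi>2 \<zeta>2] by (simp add: algebra_simps add_divide_distrib diff_divide_distrib)
    have "\<bar>\<xi>1 t - \<zeta>1 t\<bar> \<le> 3 / 2 * integral {0..t} u"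
      by (rule damped_component_abs_bound[OF d1 c(1) u_int]) (auto simp: u_def)
    moreover have "\<bar>\<xi>2 t - \<zeta>2 t\<bar> \<le> 3 / 2 * integral {0..t} u"
      by (rule damped_component_abs_bound[OF d2 c(2) u_int]) (auto simp: u_def)
    ultimately show ?thesis unfolding u_def by simp
  qed
  then have "u \<tau> = 0"
    by (intro gronwall_zero[OF _ u_cont _ \<tau>, of 3]) (auto simp: u_def)
  then show ?thesis unfolding u_def by (simp add: add_nonneg_eq_0_iff)
qed

lemma admissible_constant_control:
  "0 \<le> k \<Longrightarrow> k \<le> 1 \<Longrightarrow> 2 * k \<le> M \<Longrightarrow> admissible T M (\<lambda>_. k) (\<lambda>_. k)"
  unfolding admissible_def set_borel_measurable_def by auto

lemma optimal_cost_le_constant_control: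
  assumes "0 < M" "M \<le> 2" and opt: "optimal T M x x a1 a2"
    and \<xi>: "is_traj T a1 a2 x x \<xi>1 \<xi>2"
  shows "cost T \<xi>1 \<xi>2 \<le> (x * exp (- (M / 2) * T))\<^sup>2"
proof -
  let ?\<eta> = "\<lambda>t. x * exp (- (M / 2) * t)"
  have "admissible T M (\<lambda>_. M / 2) (\<lambda>_. M / 2)"
    using assms(1,2) by (intro admissible_constant_control) auto
  then have "cost T \<xi>1 \<xi>2 \<le> cost T ?\<eta> ?\<eta>"
    using opt \<xi> is_traj_constant_control[of T "M / 2" x] unfolding optimal_def by blast
  also have "\<dots> = (x * exp (- (M / 2) * T))\<^sup>2"
    unfolding cost_def by (simp add: power2_eq_square)
  finally show ?thesis .
qed

lemma optimal_if_cost_attains_lower_bound: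
  assumes "0 \<le> T" "0 < M" "0 < (x1 + x2) / 2"
    and adm: "admissible T M a1 a2" and \<xi>: "is_traj T a1 a2 x1 x2 \<xi>1 \<xi>2"
    and cost_\<xi>: "cost T \<xi>1 \<xi>2 = ((x1 + x2) / 2 * exp (- (M / 2) * T))\<^sup>2"
  shows "optimal T M x1 x2 a1 a2"
  unfolding optimal_def
proof (intro conjI allI impI adm, elim conjE)
  fix \<zeta>1 \<zeta>2 b1 b2 \<eta>1 \<eta>2
  assume \<zeta>: "is_traj T a1 a2 x1 x2 \<zeta>1 \<zeta>2" and "admissible T M b1 b2" "is_traj T b1 b2 x1 x2 \<eta>1 \<eta>2"
  have "cost T \<zeta>1 \<zeta>2 = cost T \<xi>1 \<xi>2"
    using is_traj_unique[OF adm \<xi> \<zeta>] assms(1) by (simp add: cost_def)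
  also have "\<dots> \<le> cost T \<eta>1 \<eta>2"
    unfolding cost_\<xi> by (rule cost_lower_bound(1)[OF assms(1-3) \<open>admissible T M b1 b2\<close>]) fact
  finally show "cost T \<zeta>1 \<zeta>2 \<le> cost T \<eta>1 \<eta>2" .
qed

theorem proposition5:
  fixes T M x1 x2 :: real and a1 a2 \<xi>1 \<xi>2 :: "real \<Rightarrow> real"
  assumes "T > 0" and "0 < M" and "M \<le> 2"
    and "(x1 + x2) / 2 > 0" and "x1 = x2"
    and "admissible T M a1 a2"
    and "is_traj T a1 a2 x1 x2 \<xi>1 \<xi>2"
  shows "optimal T M x1 x2 a1 a2 \<longleftrightarrow>
           ((AE t in lborel. t \<in> {0..T} \<longrightarrow> a1 t + a2 t = M) \<and> \<xi>1 T = \<xi>2 T)"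
proof -
  note hyps = less_imp_le[OF assms(1)] assms(2,4,6,7)
  show ?thesis
  proof
    assume "optimal T M x1 x2 a1 a2"
    then have "cost T \<xi>1 \<xi>2 \<le> ((x1 + x2) / 2 * exp (- (M / 2) * T))\<^sup>2"
      using optimal_cost_le_constant_control[OF assms(2,3)] assms(5,7) by simp
    then show "(AE t in lborel. t \<in> {0..T} \<longrightarrow> a1 t + a2 t = M) \<and> \<xi>1 T = \<xi>2 T"
      using cost_lower_bound[OF hyps] by simp
  next
    assume "(AE t in lborel. t \<in> {0..T} \<longrightarrow> a1 t + a2 t = M) \<and> \<xi>1 T = \<xi>2 T"
    then show "optimal T M x1 x2 a1 a2"
      using cost_lower_bound(2)[OF hyps] by (intro optimal_if_cost_attains_lower_bound[OF hyps]) simp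
  qed
qed

end
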